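(* Let $(A,\leq,\cdot,/)$ be a narhoop and let $N$ be a nonempty normal subnarhoop of $A$. Define a relation $\preceq_N$ on $A$ by $x\preceq_N y$ iff $y/x\in N$. Then: (1) for all $x,y,z\in A$, $x\preceq_N y$ implies $xz\preceq_N yz$; (2) for all $x,y,z\in A$, $x\preceq_N y$ implies $x/z\preceq_N y/z$; (3) $\preceq_N$ is a preorder (reflexive and transitive); in particular $y/y\in N$ for all $y\in A$.
   Context: Write $xy$ for $x\cdot y$; $\cdot$ binds more strongly than $/$, and $/$ binds more strongly than $\sqcap$, where $x\sqcap y := (x/y)y$. A right-residuated magma is a structure $(A,\leq,\cdot,/)$ where $(A,\leq)$ is a poset and $xy\leq z\iff x\leq z/y$ for all $x,y,z\in A$. A narhoop is a right-residuated magma such that for all $x,y$: $x\leq y\iff x\sqcap y = x = y\sqcap x$. For $x,y\in A$ define maps $A\to A$ by $\phi_{1,x,y}(z)=((zx)y)/(xy)$, $\phi_{2,x,y}(z)=((zx)/y)/(x/y)$, $\phi_{3,x,y}(z)=(x(zy))/(xy)$, $\phi_{4,x,y}(z)=(x/(zy))/(x/y)$, $\phi_{5,x,y}(z)=(xy)/(x(zy))$, $\phi_{6,x,y}(z)=(x/y)/(x/(zy))$; $\mathrm{Inn}(A)$ is the semigroup of maps generated by all of these under composition. A nonempty subset $N\subseteq A$ is a normal subnarhoop if (i) $N$ is closed under $\cdot$ and $/$; (ii) whenever $x\leq y$ and $x\in N$, then $y\in N$; (iii) $\phi(N)\subseteq N$ for all $\phi\in\mathrm{Inn}(A)$. *)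

theory Defs
  imports Main
begin

text \<open>A right-residuated magma on a type 'a: a partial order le, a multiplication m
  and a right residual d (written x / y = d x y), with m x y \<le> z iff x \<le> d z y.\<close>

definition right_residuated_magma ::
  "('a \<Rightarrow> 'a \<Rightarrow> bool) \<Rightarrow> ('a \<Rightarrow> 'a \<Rightarrow> 'a) \<Rightarrow> ('a \<Rightarrow> 'a \<Rightarrow> 'a) \<Rightarrow> bool" where
  "right_residuated_magma le m d \<longleftrightarrow>
     partial_order_on UNIV {(x, y). le x y} \<and>
     (\<forall>x y z. le (m x y) z \<longleftrightarrow> le x (d z y))"

definition meetop :: "('a \<Rightarrow> 'a \<Rightarrow> 'a) \<Rightarrow> ('a \<Rightarrow> 'a \<Rightarrow> 'a) \<Rightarrow> 'a \<Rightarrow> 'a \<Rightarrow> 'a" where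
  "meetop m d x y = m (d x y) y"

definition narhoop ::
  "('a \<Rightarrow> 'a \<Rightarrow> bool) \<Rightarrow> ('a \<Rightarrow> 'a \<Rightarrow> 'a) \<Rightarrow> ('a \<Rightarrow> 'a \<Rightarrow> 'a) \<Rightarrow> bool" where
  "narhoop le m d \<longleftrightarrow> right_residuated_magma le m d \<and>
     (\<forall>x y. le x y \<longleftrightarrow> (meetop m d x y = x \<and> x = meetop m d y x))"

definition inner_gens :: "('a \<Rightarrow> 'a \<Rightarrow> 'a) \<Rightarrow> ('a \<Rightarrow> 'a \<Rightarrow> 'a) \<Rightarrow> ('a \<Rightarrow> 'a) set" where
  "inner_gens m d = (\<Union>x. \<Union>y.
     { (\<lambda>z. d (m (m z x) y) (m x y)),
       (\<lambda>z. d (d (m z x) y) (d x y)),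
       (\<lambda>z. d (m x (m z y)) (m x y)),
       (\<lambda>z. d (d x (m z y)) (d x y)),
       (\<lambda>z. d (m x y) (m x (m z y))),
       (\<lambda>z. d (d x y) (d x (m z y))) })"

inductive_set Inn :: "('a \<Rightarrow> 'a \<Rightarrow> 'a) \<Rightarrow> ('a \<Rightarrow> 'a \<Rightarrow> 'a) \<Rightarrow> ('a \<Rightarrow> 'a) set"
  for m d where
  gen: "\<phi> \<in> inner_gens m d \<Longrightarrow> \<phi> \<in> Inn m d"
| comp: "\<phi> \<in> Inn m d \<Longrightarrow> \<psi> \<in> Inn m d \<Longrightarrow> \<phi> \<circ> \<psi> \<in> Inn m d"

definition normal_subnarhoop ::
  "('a \<Rightarrow> 'a \<Rightarrow> bool) \<Rightarrow> ('a \<Rightarrow> 'a \<Rightarrow> 'a) \<Rightarrow> ('a \<Rightarrow> 'a \<Rightarrow> 'a) \<Rightarrow> 'a set \<Rightarrow> bool" where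
  "normal_subnarhoop le m d N \<longleftrightarrow>
     N \<noteq> {} \<and>
     (\<forall>x\<in>N. \<forall>y\<in>N. m x y \<in> N \<and> d x y \<in> N) \<and>
     (\<forall>x y. le x y \<and> x \<in> N \<longrightarrow> y \<in> N) \<and>
     (\<forall>\<phi>\<in>Inn m d. \<phi> ` N \<subseteq> N)"

definition precN :: "('a \<Rightarrow> 'a \<Rightarrow> 'a) \<Rightarrow> 'a set \<Rightarrow> 'a \<Rightarrow> 'a \<Rightarrow> bool" where
  "precN d N x y \<longleftrightarrow> d y x \<in> N"

end

theory Submission
  imports Defs
begin

text \<open>Compatibility of \<open>\<preceq>\<^sub>N\<close> with right multiplication and right division comes from
  applying the inner maps \<open>\<phi>\<^sub>1\<close>, \<open>\<phi>\<^sub>2\<close> to \<open>y/x \<in> N\<close> and using that \<open>N\<close> is an up-set, since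
  \<open>(y/x)x \<le> y\<close>. Transitivity then follows: dividing \<open>y \<preceq>\<^sub>N z\<close> by \<open>x\<close> gives
  \<open>(z/x)/(y/x) \<in> N\<close>, and \<open>N\<close> is closed under \<open>a, b/a \<mapsto> (b/a)a \<le> b\<close>. Reflexivity,
  i.e. \<open>y/y \<in> N\<close>, is obtained by transporting \<open>n/n \<in> N\<close> along \<open>\<phi>\<^sub>4\<close> and \<open>\<phi>\<^sub>3\<close>.\<close>

lemma right_residuated_magma_residuation:
  assumes "right_residuated_magma le m d"
  shows "le (m x y) z \<longleftrightarrow> le x (d z y)"
  using assms unfolding right_residuated_magma_def by blast

lemma right_residuated_magma_refl:
  assumes "right_residuated_magma le m d"
  shows "le x x"
  using assms unfolding right_residuated_magma_def partial_order_on_def preorder_on_def refl_on_def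
  by blast

lemma right_residuated_magma_trans:
  assumes "right_residuated_magma le m d" and "le x y" and "le y z"
  shows "le x z"
  using assms unfolding right_residuated_magma_def partial_order_on_def preorder_on_def trans_def
  by blast

lemma right_residuated_magma_mult_div_le:
  assumes "right_residuated_magma le m d"
  shows "le (m (d y x) x) y"
  using right_residuated_magma_residuation[OF assms] right_residuated_magma_refl[OF assms] by blast

lemma right_residuated_magma_le_div_mult:
  assumes "right_residuated_magma le m d"
  shows "le x (d (m x y) y)"
  using right_residuated_magma_residuation[OF assms] right_residuated_magma_refl[OF assms] by blast

lemma right_residuated_magma_mult_mono_left:
  assumes rrm: "right_residuated_magma le m d" and "le x y"
  shows "le (m x z) (m y z)"
  using assms right_residuated_magma_le_div_mult[OF rrm]
    right_residuated_magma_residuation[OF rrm] right_residuated_magma_trans[OF rrm] by blast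

lemma right_residuated_magma_div_mono_left:
  assumes rrm: "right_residuated_magma le m d" and "le x y"
  shows "le (d x z) (d y z)"
  using assms right_residuated_magma_mult_div_le[OF rrm]
    right_residuated_magma_residuation[OF rrm] right_residuated_magma_trans[OF rrm] by blast

lemma narhoop_right_residuated_magma:
  "narhoop le m d \<Longrightarrow> right_residuated_magma le m d"
  unfolding narhoop_def by blast

lemma narhoop_div_mult_eq_of_le:
  assumes "narhoop le m d" and "le x y"
  shows "m (d x y) y = x"
  using assms unfolding narhoop_def meetop_def by blast

lemma narhoop_div_self_mult:
  assumes "narhoop le m d"
  shows "m (d x x) x = x"
  using narhoop_div_mult_eq_of_le[OF assms]
    right_residuated_magma_refl[OF narhoop_right_residuated_magma[OF assms]] by blast

lemma Inn_phi1: "(\<lambda>z. d (m (m z x) y) (m x y)) \<in> Inn m d"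
  by (rule Inn.gen) (unfold inner_gens_def, blast)

lemma Inn_phi2: "(\<lambda>z. d (d (m z x) y) (d x y)) \<in> Inn m d"
  by (rule Inn.gen) (unfold inner_gens_def, blast)

lemma Inn_phi3: "(\<lambda>z. d (m x (m z y)) (m x y)) \<in> Inn m d"
  by (rule Inn.gen) (unfold inner_gens_def, blast)

lemma Inn_phi4: "(\<lambda>z. d (d x (m z y)) (d x y)) \<in> Inn m d"
  by (rule Inn.gen) (unfold inner_gens_def, blast)

lemma normal_subnarhoop_nonempty: "normal_subnarhoop le m d N \<Longrightarrow> \<exists>n. n \<in> N"
  unfolding normal_subnarhoop_def by blast

lemma normal_subnarhoop_mult_closed:
  "normal_subnarhoop le m d N \<Longrightarrow> x \<in> N \<Longrightarrow> y \<in> N \<Longrightarrow> m x y \<in> N"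
  unfolding normal_subnarhoop_def by blast

lemma normal_subnarhoop_div_closed:
  "normal_subnarhoop le m d N \<Longrightarrow> x \<in> N \<Longrightarrow> y \<in> N \<Longrightarrow> d x y \<in> N"
  unfolding normal_subnarhoop_def by blast

lemma normal_subnarhoop_upward_closed:
  "normal_subnarhoop le m d N \<Longrightarrow> le x y \<Longrightarrow> x \<in> N \<Longrightarrow> y \<in> N"
  unfolding normal_subnarhoop_def by blast

lemma normal_subnarhoop_Inn_closed:
  "normal_subnarhoop le m d N \<Longrightarrow> \<phi> \<in> Inn m d \<Longrightarrow> x \<in> N \<Longrightarrow> \<phi> x \<in> N"
  unfolding normal_subnarhoop_def by blast

lemma normal_subnarhoop_in_of_div_in:
  assumes rrm: "right_residuated_magma le m d" and N: "normal_subnarhoop le m d N"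
    and "x \<in> N" and "d y x \<in> N"
  shows "y \<in> N"
  using assms normal_subnarhoop_mult_closed[OF N] right_residuated_magma_mult_div_le[OF rrm]
    normal_subnarhoop_upward_closed[OF N] by blast

lemma precN_mult_right:
  assumes rrm: "right_residuated_magma le m d" and N: "normal_subnarhoop le m d N"
    and "precN d N x y"
  shows "precN d N (m x z) (m y z)"
proof -
  have "d (m (m (d y x) x) z) (m x z) \<in> N"
    using normal_subnarhoop_Inn_closed[OF N Inn_phi1] assms(3) unfolding precN_def by simp
  moreover have "le (d (m (m (d y x) x) z) (m x z)) (d (m y z) (m x z))"
    by (intro right_residuated_magma_div_mono_left[OF rrm] right_residuated_magma_mult_mono_left[OF rrm]
        right_residuated_magma_mult_div_le[OF rrm])
  ultimately show ?thesis
    using normal_subnarhoop_upward_closed[OF N] unfolding precN_def by blast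
qed

lemma precN_div_right:
  assumes rrm: "right_residuated_magma le m d" and N: "normal_subnarhoop le m d N"
    and "precN d N x y"
  shows "precN d N (d x z) (d y z)"
proof -
  have "d (d (m (d y x) x) z) (d x z) \<in> N"
    using normal_subnarhoop_Inn_closed[OF N Inn_phi2] assms(3) unfolding precN_def by simp
  moreover have "le (d (d (m (d y x) x) z) (d x z)) (d (d y z) (d x z))"
    by (intro right_residuated_magma_div_mono_left[OF rrm] right_residuated_magma_mult_div_le[OF rrm])
  ultimately show ?thesis
    using normal_subnarhoop_upward_closed[OF N] unfolding precN_def by blast
qed

lemma precN_trans:
  assumes rrm: "right_residuated_magma le m d" and N: "normal_subnarhoop le m d N"
    and xy: "precN d N x y" and yz: "precN d N y z"
  shows "precN d N x z"
proof -
  have "d (d z x) (d y x) \<in> N"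
    using precN_div_right[OF rrm N yz] unfolding precN_def .
  with xy show ?thesis
    using normal_subnarhoop_in_of_div_in[OF rrm N] unfolding precN_def by blast
qed

lemma narhoop_div_self_in_normal_subnarhoop:
  assumes nar: "narhoop le m d" and N: "normal_subnarhoop le m d N"
  shows "d y y \<in> N"
proof -
  note rrm = narhoop_right_residuated_magma[OF nar]
  obtain n where n: "n \<in> N" using normal_subnarhoop_nonempty[OF N] by blast
  define b where "b = d (m y n) n"
  have "d (d (m y n) (m (d n n) n)) (d (m y n) n) \<in> N"
    using normal_subnarhoop_Inn_closed[OF N Inn_phi4] normal_subnarhoop_div_closed[OF N n n]
    by simp
  then have bb: "d b b \<in> N"
    unfolding b_def narhoop_div_self_mult[OF nar] .
  have "d (m (d y b) (m (d b b) b)) (m (d y b) b) \<in> N"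
    using normal_subnarhoop_Inn_closed[OF N Inn_phi3 bb] by simp
  moreover have "le y b"
    unfolding b_def by (rule right_residuated_magma_le_div_mult[OF rrm])
  ultimately show ?thesis
    by (simp add: narhoop_div_self_mult[OF nar] narhoop_div_mult_eq_of_le[OF nar])
qed

theorem mainTheorem13:
  fixes le :: "'a \<Rightarrow> 'a \<Rightarrow> bool" and m d :: "'a \<Rightarrow> 'a \<Rightarrow> 'a" and N :: "'a set"
  assumes "narhoop le m d"
    and "normal_subnarhoop le m d N"
  shows "(\<forall>x y z. precN d N x y \<longrightarrow> precN d N (m x z) (m y z))
    \<and> (\<forall>x y z. precN d N x y \<longrightarrow> precN d N (d x z) (d y z))
    \<and> (\<forall>x. precN d N x x)
    \<and> (\<forall>x y z. precN d N x y \<longrightarrow> precN d N y z \<longrightarrow> precN d N x z)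
    \<and> (\<forall>y. d y y \<in> N)"
proof -
  note rrm = narhoop_right_residuated_magma[OF assms(1)]
  show ?thesis
    using narhoop_div_self_in_normal_subnarhoop[OF assms]
      precN_mult_right[OF rrm assms(2)] precN_div_right[OF rrm assms(2)]
      precN_trans[OF rrm assms(2)] unfolding precN_def by blast
qed

end
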